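(* Let $\mathbf d$ be a graphical degree sequence of even length. Then $\mathbf d$ has a realization containing a perfect 2-matching if and only if $\mathbf d$ has a realization containing a perfect matching.
   Context: All graphs are finite and simple. A sequence $(d_1,\dots,d_n)$ is graphical if some simple graph on $\{v_1,\dots,v_n\}$ has $d(v_i)=d_i$ for all $i$; such a graph is a realization. A perfect 2-matching of a graph is a spanning subgraph each of whose connected components is either a $K_2$ (a single edge) or an odd cycle. *)

theory Defs
  imports Main
begin

text \<open>Simple graphs on the vertex set {0..<n} (vertex v_(i+1) of the paper is i here),
  given by a set of 2-element edges.\<close>

definition edges_on :: "nat \<Rightarrow> nat set set" where
  "edges_on n = {e. \<exists>u v. e = {u, v} \<and> u \<noteq> v \<and> u < n \<and> v < n}"

definition is_graph :: "nat \<Rightarrow> nat set set \<Rightarrow> bool" where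
  "is_graph n E \<longleftrightarrow> E \<subseteq> edges_on n"

definition deg :: "nat set set \<Rightarrow> nat \<Rightarrow> nat" where
  "deg E v = card {e \<in> E. v \<in> e}"

definition realization :: "nat list \<Rightarrow> nat set set \<Rightarrow> bool" where
  "realization d E \<longleftrightarrow> is_graph (length d) E \<and> (\<forall>i < length d. deg E i = d ! i)"

definition graphical :: "nat list \<Rightarrow> bool" where
  "graphical d \<longleftrightarrow> (\<exists>E. realization d E)"

definition perfect_matching :: "nat \<Rightarrow> nat set set \<Rightarrow> nat set set \<Rightarrow> bool" where
  "perfect_matching n E M \<longleftrightarrow> M \<subseteq> E \<and> (\<forall>v < n. \<exists>!e. e \<in> M \<and> v \<in> e)"

definition adj :: "nat set set \<Rightarrow> nat \<Rightarrow> nat \<Rightarrow> bool" where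
  "adj H u v \<longleftrightarrow> {u, v} \<in> H"

definition comp :: "nat set set \<Rightarrow> nat \<Rightarrow> nat set" where
  "comp H v = {u. (adj H)\<^sup>*\<^sup>* v u}"

definition is_K2_comp :: "nat set set \<Rightarrow> nat set \<Rightarrow> bool" where
  "is_K2_comp H C \<longleftrightarrow> (\<exists>u v. u \<noteq> v \<and> C = {u, v} \<and> {e \<in> H. e \<subseteq> C} = {{u, v}})"

definition is_odd_cycle_comp :: "nat set set \<Rightarrow> nat set \<Rightarrow> bool" where
  "is_odd_cycle_comp H C \<longleftrightarrow>
     (\<exists>k f. odd k \<and> k \<ge> 3 \<and> bij_betw f {0..<k} C \<and>
        {e \<in> H. e \<subseteq> C} = {{f i, f (Suc i mod k)} | i. i < k})"

definition perfect_2_matching :: "nat \<Rightarrow> nat set set \<Rightarrow> nat set set \<Rightarrow> bool" where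
  "perfect_2_matching n E H \<longleftrightarrow> H \<subseteq> E \<and>
     (\<forall>v < n. is_K2_comp H (comp H v) \<or> is_odd_cycle_comp H (comp H v))"

end

theory Submission
  imports Defs
begin

text \<open>The K2 components of a perfect 2-matching perfectly match their vertex set S, and
  every odd cycle C is near-matchable: it has an edge aa' such that both C - a and C - a' have
  perfect matchings. As the number of vertices is even, these odd blocks can be merged in pairs.
  For disjoint near-matchable blocks B \<ni> a, a' and D \<ni> b, b', if ab (or a'b') is an edge it
  joins perfect matchings of B - a and D - b (or of B - a' and D - b') into one of B \<union> D;
  otherwise the degree-preserving switch replacing aa', bb' by ab, a'b' creates the edge ab
  without touching any edge outside B \<union> D.\<close>

definition perfect_matching_on :: "'a set set \<Rightarrow> 'a set \<Rightarrow> 'a set set \<Rightarrow> bool" where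
  "perfect_matching_on E S M \<longleftrightarrow> M \<subseteq> E \<and> \<Union>M = S \<and> pairwise disjnt M"

definition matchable :: "'a set set \<Rightarrow> 'a set \<Rightarrow> bool" where
  "matchable E S \<longleftrightarrow> (\<exists>M. perfect_matching_on E S M)"

lemma matchable_edge: "{a, b} \<in> E \<Longrightarrow> matchable E {a, b}"
  unfolding matchable_def perfect_matching_on_def by (intro exI[of _ "{{a, b}}"]) auto

lemma matchable_Un:
  assumes "matchable E X" "matchable E Y" "X \<inter> Y = {}"
  shows "matchable E (X \<union> Y)"
proof -
  obtain M N where M: "M \<subseteq> E" "\<Union>M = X" "pairwise disjnt M"
    and N: "N \<subseteq> E" "\<Union>N = Y" "pairwise disjnt N"
    using assms(1,2) unfolding matchable_def perfect_matching_on_def by blast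
  have cross: "disjnt e e'" if "e \<in> M" "e' \<in> N" for e e'
    using that M(2) N(2) assms(3) by (auto simp: disjnt_def)
  have "pairwise disjnt (M \<union> N)"
  proof (rule pairwiseI)
    fix e e' assume "e \<in> M \<union> N" "e' \<in> M \<union> N" "e \<noteq> e'"
    then show "disjnt e e'"
      by (metis UnE cross disjnt_sym pairwiseD M(3) N(3))
  qed
  with M N have "perfect_matching_on E (X \<union> Y) (M \<union> N)"
    unfolding perfect_matching_on_def by auto
  then show ?thesis unfolding matchable_def by blast
qed

lemma matchable_mono:
  assumes "matchable E S" "\<forall>e\<in>E. e \<subseteq> S \<longrightarrow> e \<in> E'"
  shows "matchable E' S"
  using assms unfolding matchable_def perfect_matching_on_def by blast

lemma matchable_even_card:
  assumes "matchable E S" "finite S" "\<forall>e\<in>E. card e = 2"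
  shows "even (card S)"
proof -
  obtain M where M: "M \<subseteq> E" "\<Union>M = S" "pairwise disjnt M"
    using assms(1) unfolding matchable_def perfect_matching_on_def by blast
  have "finite e" if "e \<in> M" for e
    using that M(2) assms(2) by (meson Union_upper finite_subset)
  then have "card S = (\<Sum>e\<in>M. card e)"
    using card_Union_disjoint[OF M(3)] M(2) by simp
  also have "\<dots> = (\<Sum>e\<in>M. 2)"
    using M(1) assms(3) by (intro sum.cong) auto
  finally show ?thesis by simp
qed

lemma perfect_matching_iff_perfect_matching_on:
  assumes "E \<subseteq> edges_on n"
  shows "perfect_matching n E M \<longleftrightarrow> perfect_matching_on E {0..<n} M"
proof
  assume pm: "perfect_matching n E M"
  then have "M \<subseteq> edges_on n" using assms unfolding perfect_matching_def by auto
  then have "\<Union>M \<subseteq> {0..<n}" unfolding edges_on_def by auto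
  moreover have "{0..<n} \<subseteq> \<Union>M" using pm unfolding perfect_matching_def by fastforce
  moreover have "pairwise disjnt M"
  proof (rule pairwiseI)
    fix e e' assume "e \<in> M" "e' \<in> M" "e \<noteq> e'"
    moreover have "v \<notin> e'" if "v \<in> e" for v
    proof
      assume "v \<in> e'"
      have "v < n" using that \<open>e \<in> M\<close> \<open>\<Union>M \<subseteq> {0..<n}\<close> by auto
      then show False
        using pm that \<open>v \<in> e'\<close> \<open>e \<in> M\<close> \<open>e' \<in> M\<close> \<open>e \<noteq> e'\<close>
        unfolding perfect_matching_def by (metis (no_types, lifting))
    qed
    ultimately show "disjnt e e'" unfolding disjnt_def by blast
  qed
  ultimately show "perfect_matching_on E {0..<n} M"
    using pm unfolding perfect_matching_def perfect_matching_on_def by blast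
next
  assume "perfect_matching_on E {0..<n} M"
  then have M: "M \<subseteq> E" "\<Union>M = {0..<n}" "pairwise disjnt M"
    unfolding perfect_matching_on_def by auto
  have "\<exists>!e. e \<in> M \<and> v \<in> e" if "v < n" for v
  proof -
    have "v \<in> \<Union>M" using M(2) \<open>v < n\<close> by simp
    then obtain e where e: "e \<in> M" "v \<in> e" by blast
    have "e' = e" if "e' \<in> M" "v \<in> e'" for e'
      using pairwiseD[OF M(3) \<open>e' \<in> M\<close> \<open>e \<in> M\<close>] e that by (auto simp: disjnt_iff)
    with e show ?thesis by blast
  qed
  with M(1) show "perfect_matching n E M" unfolding perfect_matching_def by blast
qed

definition near_matchable :: "'a set set \<Rightarrow> 'a set \<Rightarrow> bool" where
  "near_matchable E B \<longleftrightarrow> (\<exists>a a'. a \<in> B \<and> a' \<in> B \<and> a \<noteq> a' \<and> {a, a'} \<in> E \<and>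
     matchable E (B - {a}) \<and> matchable E (B - {a'}))"

lemma near_matchable_mono:
  assumes "near_matchable E B" "\<forall>e\<in>E. e \<subseteq> B \<longrightarrow> e \<in> E'"
  shows "near_matchable E' B"
proof -
  obtain a a' where a: "a \<in> B" "a' \<in> B" "a \<noteq> a'" "{a, a'} \<in> E"
    and m: "matchable E (B - {a})" "matchable E (B - {a'})"
    using assms(1) unfolding near_matchable_def by auto
  have "matchable E' (B - {a})" "matchable E' (B - {a'})"
    using matchable_mono[OF m(1)] matchable_mono[OF m(2)] assms(2)
    by (meson Diff_subset subset_trans)+
  moreover have "{a, a'} \<in> E'" using a assms(2) by simp
  ultimately show ?thesis
    using a(1-3) unfolding near_matchable_def by auto
qed

lemma near_matchable_odd_card:
  assumes "near_matchable E B" "finite B" "\<forall>e\<in>E. card e = 2"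
  shows "odd (card B)"
proof -
  obtain a where "a \<in> B" "matchable E (B - {a})"
    using assms(1) unfolding near_matchable_def by auto
  have "even (card (B - {a}))"
    using matchable_even_card[OF \<open>matchable E (B - {a})\<close>] assms(2,3) by simp
  moreover have "card B = Suc (card (B - {a}))"
    using card_Suc_Diff1[OF assms(2) \<open>a \<in> B\<close>] by simp
  ultimately show ?thesis by simp
qed

lemma matchable_join_by_edge:
  assumes "matchable E (B - {x})" "matchable E (D - {y})" "{x, y} \<in> E"
    and "x \<in> B" "y \<in> D" "B \<inter> D = {}"
  shows "matchable E (B \<union> D)"
proof -
  have "matchable E ((D - {y}) \<union> {x, y})"
    by (rule matchable_Un[OF assms(2) matchable_edge[OF assms(3)]]) (use assms(4,6) in auto)
  then have "matchable E ((B - {x}) \<union> ((D - {y}) \<union> {x, y}))"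
    by (rule matchable_Un[OF assms(1)]) (use assms(5,6) in auto)
  moreover have "(B - {x}) \<union> ((D - {y}) \<union> {x, y}) = B \<union> D" using assms(4,5) by auto
  ultimately show ?thesis by simp
qed

lemma deg_Un_disjoint:
  "finite A \<Longrightarrow> finite B \<Longrightarrow> A \<inter> B = {} \<Longrightarrow> deg (A \<union> B) v = deg A v + deg B v"
  unfolding deg_def by (subst card_Un_disjoint[symmetric]) (auto intro: arg_cong[where f = card])

lemma deg_two_disjoint_edges:
  assumes "distinct [p, q, r, s]"
  shows "deg {{p, q}, {r, s}} v = (if v \<in> {p, q, r, s} then 1 else 0)"
proof -
  have "{e \<in> {{p, q}, {r, s}}. v \<in> e} =
      (if v \<in> {p, q} then {{p, q}} else if v \<in> {r, s} then {{r, s}} else {})"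
    using assms by auto
  then show ?thesis unfolding deg_def by simp
qed

lemma deg_switch:
  assumes "finite E" "{a, a'} \<in> E" "{b, b'} \<in> E" "{a, b} \<notin> E" "{a', b'} \<notin> E"
    and "distinct [a, a', b, b']"
  shows "deg (E - {{a, a'}, {b, b'}} \<union> {{a, b}, {a', b'}}) v = deg E v"
proof -
  let ?E\<^sub>0 = "E - {{a, a'}, {b, b'}}"
  have "finite ?E\<^sub>0" using assms(1) by simp
  have "E = ?E\<^sub>0 \<union> {{a, a'}, {b, b'}}"
    using assms(2,3) by (metis Diff_partition Un_commute empty_subsetI insert_subset)
  then have "deg E v = deg ?E\<^sub>0 v + deg {{a, a'}, {b, b'}} v"
    using deg_Un_disjoint[OF \<open>finite ?E\<^sub>0\<close>, of "{{a, a'}, {b, b'}}"] by simp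
  moreover have "deg (?E\<^sub>0 \<union> {{a, b}, {a', b'}}) v = deg ?E\<^sub>0 v + deg {{a, b}, {a', b'}} v"
    using deg_Un_disjoint[OF \<open>finite ?E\<^sub>0\<close>, of "{{a, b}, {a', b'}}"] assms(4,5) by simp
  moreover have "deg {{a, b}, {a', b'}} v = deg {{a, a'}, {b, b'}} v"
    using assms(6) by (simp add: deg_two_disjoint_edges insert_commute)
  ultimately show ?thesis by simp
qed

lemma realization_subset_edges_on: "realization d E \<Longrightarrow> E \<subseteq> edges_on (length d)"
  unfolding realization_def is_graph_def by simp

lemma realization_edge:
  assumes "realization d E" "e \<in> E"
  obtains u v where "e = {u, v}" "u \<noteq> v" "u < length d" "v < length d"
  using realization_subset_edges_on[OF assms(1)] assms(2) unfolding edges_on_def by blast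

lemma realization_finite: "realization d E \<Longrightarrow> finite E"
  by (rule finite_subset[of _ "Pow {0..<length d}"])
    (use realization_subset_edges_on[of d E] in \<open>auto simp: edges_on_def\<close>)

lemma realization_switch:
  assumes "realization d E" "{a, a'} \<in> E" "{b, b'} \<in> E" "{a, b} \<notin> E" "{a', b'} \<notin> E"
    and "distinct [a, a', b, b']"
  shows "realization d (E - {{a, a'}, {b, b'}} \<union> {{a, b}, {a', b'}})"
proof -
  have "a < length d" "a' < length d" "b < length d" "b' < length d"
    using realization_edge[OF assms(1,2)] realization_edge[OF assms(1,3)]
    by (metis doubleton_eq_iff)+
  then have "{{a, b}, {a', b'}} \<subseteq> edges_on (length d)"
    using assms(6) unfolding edges_on_def by auto
  with assms show ?thesis
    using deg_switch[OF realization_finite[OF assms(1)] assms(2-6)]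
    unfolding realization_def is_graph_def by auto
qed

lemma realization_merge_near_matchable:
  assumes R: "realization d E" and B: "near_matchable E B" and D: "near_matchable E D"
    and BD: "B \<inter> D = {}"
  shows "\<exists>E'. realization d E' \<and> matchable E' (B \<union> D) \<and> (\<forall>e\<in>E. e \<inter> (B \<union> D) = {} \<longrightarrow> e \<in> E')"
proof -
  obtain a a' where a: "a \<in> B" "a' \<in> B" "a \<noteq> a'" "{a, a'} \<in> E"
    and ma: "matchable E (B - {a})" "matchable E (B - {a'})"
    using B unfolding near_matchable_def by auto
  obtain b b' where b: "b \<in> D" "b' \<in> D" "b \<noteq> b'" "{b, b'} \<in> E"
    and mb: "matchable E (D - {b})" "matchable E (D - {b'})"
    using D unfolding near_matchable_def by auto
  consider "{a, b} \<in> E" | "{a', b'} \<in> E" | "{a, b} \<notin> E" "{a', b'} \<notin> E" by blast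
  then show ?thesis
  proof cases
    case 1
    then have "matchable E (B \<union> D)"
      using matchable_join_by_edge[OF ma(1) mb(1) _ a(1) b(1) BD] by simp
    with R show ?thesis by (intro exI[of _ E]) simp
  next
    case 2
    then have "matchable E (B \<union> D)"
      using matchable_join_by_edge[OF ma(2) mb(2) _ a(2) b(2) BD] by simp
    with R show ?thesis by (intro exI[of _ E]) simp
  next
    case 3
    define E' where "E' = E - {{a, a'}, {b, b'}} \<union> {{a, b}, {a', b'}}"
    have "distinct [a, a', b, b']" using a b BD by auto
    then have R': "realization d E'"
      unfolding E'_def using realization_switch[OF R a(4) b(4) 3] by simp
    have keep: "e \<in> E'" if "e \<in> E" "a \<notin> e" "b \<notin> e" for e
      using that unfolding E'_def by auto
    have "matchable E' (B - {a})"
      by (rule matchable_mono[OF ma(1)]) (use keep BD b(1) in auto)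
    moreover have "matchable E' (D - {b})"
      by (rule matchable_mono[OF mb(1)]) (use keep BD a(1) in auto)
    moreover have "{a, b} \<in> E'" unfolding E'_def by simp
    ultimately have "matchable E' (B \<union> D)"
      using matchable_join_by_edge[of E' B a D b] a(1) b(1) BD by simp
    moreover have "\<forall>e\<in>E. e \<inter> (B \<union> D) = {} \<longrightarrow> e \<in> E'"
      using keep a(1) b(1) by auto
    ultimately show ?thesis using R' by (intro exI[of _ E']) simp
  qed
qed

definition block_decomposition :: "'a set set \<Rightarrow> 'a set \<Rightarrow> 'a set \<Rightarrow> 'a set set \<Rightarrow> bool" where
  "block_decomposition E V S \<B> \<longleftrightarrow> matchable E S \<and> (\<forall>B\<in>\<B>. near_matchable E B) \<and>
     pairwise disjnt \<B> \<and> S \<inter> \<Union>\<B> = {} \<and> S \<union> \<Union>\<B> = V"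

lemma realization_block_decomposition_merge:
  assumes R: "realization d E" and dec: "block_decomposition E V S \<B>"
    and "B \<in> \<B>" "D \<in> \<B>" "B \<noteq> D"
  shows "\<exists>E'. realization d E' \<and> block_decomposition E' V (S \<union> (B \<union> D)) (\<B> - {B, D})"
proof -
  have S: "matchable E S" and nm: "\<forall>C\<in>\<B>. near_matchable E C" and pw: "pairwise disjnt \<B>"
    and SB: "S \<inter> \<Union>\<B> = {}" and V: "S \<union> \<Union>\<B> = V"
    using dec unfolding block_decomposition_def by auto
  have BD: "B \<inter> D = {}" using pairwiseD[OF pw assms(3-5)] by (simp add: disjnt_def)
  obtain E' where R': "realization d E'" and mBD: "matchable E' (B \<union> D)"
    and keep: "\<forall>e\<in>E. e \<inter> (B \<union> D) = {} \<longrightarrow> e \<in> E'"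
    using realization_merge_near_matchable[OF R nm[rule_format, OF assms(3)]
        nm[rule_format, OF assms(4)] BD] by auto
  have keep_inside: "\<forall>e\<in>E. e \<subseteq> X \<longrightarrow> e \<in> E'" if X: "X \<inter> (B \<union> D) = {}" for X
  proof (intro ballI impI)
    fix e assume "e \<in> E" "e \<subseteq> X"
    with X have "e \<inter> (B \<union> D) = {}" by blast
    with keep \<open>e \<in> E\<close> show "e \<in> E'" by blast
  qed
  have disj_BD: "C \<inter> (B \<union> D) = {}" if "C \<in> \<B> - {B, D}" for C
    using that pairwiseD[OF pw] assms(3,4) by (auto simp: disjnt_def)
  have S_BD: "S \<inter> (B \<union> D) = {}" using SB assms(3,4) by auto
  have "matchable E' (S \<union> (B \<union> D))"
    using matchable_Un[OF matchable_mono[OF S keep_inside[OF S_BD]] mBD S_BD] .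
  moreover have "\<forall>C\<in>\<B> - {B, D}. near_matchable E' C"
    using nm disj_BD keep_inside near_matchable_mono by (metis DiffD1)
  moreover have "pairwise disjnt (\<B> - {B, D})" using pw by (rule pairwise_subset) auto
  moreover have "(S \<union> (B \<union> D)) \<inter> \<Union>(\<B> - {B, D}) = {}" using SB disj_BD by auto
  moreover have "(S \<union> (B \<union> D)) \<union> \<Union>(\<B> - {B, D}) = V" using V assms(3,4) by auto
  ultimately show ?thesis using R' unfolding block_decomposition_def by (intro exI[of _ E']) simp
qed

lemma realization_edge_card: "realization d E \<Longrightarrow> \<forall>e\<in>E. card e = 2"
  by (auto elim: realization_edge)

lemma realization_perfect_matching_of_block_decomposition:
  assumes "realization d E" "block_decomposition E {0..<length d} S \<B>" "even (length d)"
  shows "\<exists>E' M. realization d E' \<and> perfect_matching (length d) E' M"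
  using assms(1,2)
proof (induction "card \<B>" arbitrary: E S \<B> rule: less_induct)
  case less
  let ?V = "{0..<length d}"
  have S: "matchable E S" and nm: "\<forall>B\<in>\<B>. near_matchable E B"
    and SB: "S \<inter> \<Union>\<B> = {}" and V: "S \<union> \<Union>\<B> = ?V"
    using less.prems(2) unfolding block_decomposition_def by auto
  have card2: "\<forall>e\<in>E. card e = 2" using realization_edge_card[OF less.prems(1)] .
  consider "\<B> = {}" | B where "\<B> = {B}" | B D where "B \<in> \<B>" "D \<in> \<B>" "B \<noteq> D"
    by blast
  then show ?case
  proof cases
    case 1
    then obtain M where "perfect_matching_on E ?V M"
      using S V unfolding matchable_def by auto
    then show ?thesis
      using less.prems(1) perfect_matching_iff_perfect_matching_on[OF realization_subset_edges_on]
      by blast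
  next
    case (2 B)
    have "finite S" "finite B"
      using V 2 by (metis finite_Un finite_atLeastLessThan Union_insert ccpo_Sup_singleton)+
    then have "length d = card S + card B"
      using card_Un_disjoint[of S B] SB V 2 by simp
    moreover have "even (card S)" using matchable_even_card[OF S \<open>finite S\<close> card2] .
    moreover have "odd (card B)" using near_matchable_odd_card[OF _ \<open>finite B\<close> card2] nm 2 by simp
    ultimately show ?thesis using assms(3) by simp
  next
    case (3 B D)
    obtain E' where R': "realization d E'"
      and dec': "block_decomposition E' ?V (S \<union> (B \<union> D)) (\<B> - {B, D})"
      using realization_block_decomposition_merge[OF less.prems 3] by blast
    have "finite \<B>" using V finite_UnionD by (metis finite_Un finite_atLeastLessThan)
    then have "card (\<B> - {B, D}) < card \<B>"
      using 3(1) by (intro psubset_card_mono) auto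
    then show ?thesis using less.hyps[OF _ R' dec'] by blast
  qed
qed

lemma comp_self: "v \<in> comp H v"
  unfolding comp_def by simp

lemma symp_adj: "symp (adj H)"
  unfolding symp_def adj_def by (simp add: insert_commute)

lemma comp_eq:
  assumes "u \<in> comp H v"
  shows "comp H u = comp H v"
proof -
  have vu: "(adj H)\<^sup>*\<^sup>* v u" using assms unfolding comp_def by simp
  then have uv: "(adj H)\<^sup>*\<^sup>* u v"
    by (rule sympD[OF symp_rtranclp[OF symp_adj]])
  show ?thesis
    unfolding comp_def using rtranclp_trans[OF vu] rtranclp_trans[OF uv] by blast
qed

lemma pairwise_disjnt_comp: "pairwise disjnt (comp H ` V)"
proof (rule pairwiseI)
  fix C C' assume "C \<in> comp H ` V" "C' \<in> comp H ` V" "C \<noteq> C'"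
  then obtain u v where "C = comp H u" "C' = comp H v" "comp H u \<noteq> comp H v" by auto
  then show "disjnt C C'" unfolding disjnt_iff using comp_eq by metis
qed

lemma comp_subset:
  assumes "H \<subseteq> edges_on n" "v < n"
  shows "comp H v \<subseteq> {0..<n}"
proof
  fix u assume "u \<in> comp H v"
  then have "(adj H)\<^sup>*\<^sup>* v u" unfolding comp_def by simp
  then show "u \<in> {0..<n}"
  proof (induction rule: rtranclp_induct)
    case base
    then show ?case using assms(2) by simp
  next
    case (step y z)
    then have "{y, z} \<in> edges_on n" using assms(1) unfolding adj_def by auto
    then show ?case unfolding edges_on_def by (auto simp: doubleton_eq_iff)
  qed
qed

lemma Union_comp:
  assumes "H \<subseteq> edges_on n"
  shows "\<Union>(comp H ` {0..<n}) = {0..<n}"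
proof
  show "\<Union>(comp H ` {0..<n}) \<subseteq> {0..<n}"
    using comp_subset[OF assms] by (intro UN_least) simp
  show "{0..<n} \<subseteq> \<Union>(comp H ` {0..<n})" using comp_self by auto
qed

lemma matchable_empty: "matchable E {}"
  unfolding matchable_def perfect_matching_on_def by (intro exI[of _ "{}"]) simp

lemma matchable_path:
  assumes "inj_on f {m..<m + 2 * l}"
    and "\<And>i. m \<le> i \<Longrightarrow> Suc i < m + 2 * l \<Longrightarrow> {f i, f (Suc i)} \<in> E"
  shows "matchable E (f ` {m..<m + 2 * l})"
  using assms
proof (induction l)
  case 0
  then show ?case by (simp add: matchable_empty)
next
  case (Suc l)
  let ?p = "m + 2 * l"
  have img: "f ` {m..<m + 2 * Suc l} = f ` {m..<?p} \<union> {f ?p, f (Suc ?p)}"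
    by (auto simp: image_iff less_Suc_eq)
  have "matchable E (f ` {m..<?p})"
    using Suc.prems by (intro Suc.IH) (auto elim: inj_on_subset)
  moreover have "matchable E {f ?p, f (Suc ?p)}"
    using Suc.prems(2) by (intro matchable_edge) simp
  moreover have "f ` {m..<?p} \<inter> {f ?p, f (Suc ?p)} = {}"
    using Suc.prems(1) by (auto simp: inj_on_image_mem_iff)
  ultimately show ?case unfolding img by (rule matchable_Un)
qed

lemma inj_on_mod_window: "inj_on (\<lambda>i::nat. i mod k) {j..<j + k}"
proof (rule inj_onI)
  have eq: "i = i'" if "i mod k = i' mod k" "i' \<le> i" "i' \<ge> j" "i < j + k" for i i'
  proof -
    have "k dvd i - i'" using that(1,2) by (simp add: mod_eq_dvd_iff_nat)
    moreover have "i - i' < k" using that(2-4) by simp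
    ultimately show ?thesis
      using that(2) by (metis diff_is_0_eq dvd_imp_le le_antisym not_le zero_less_diff)
  qed
  fix i i' assume "i \<in> {j..<j + k}" "i' \<in> {j..<j + k}" "i mod k = i' mod k"
  then show "i = i'" using eq[of i i'] eq[of i' i] by (cases "i' \<le> i") auto
qed

lemma odd_cycle_minus_vertex_matchable:
  assumes "odd k" "bij_betw f {0..<k} C" "\<forall>i<k. {f i, f (Suc i mod k)} \<in> E" "j < k"
  shows "matchable E (C - {f j})"
proof -
  obtain l where k: "k = Suc (2 * l)" using assms(1) oddE by (metis Suc_eq_plus1)
  define g where "g i = f (i mod k)" for i
  let ?I = "{Suc j..<Suc j + 2 * l}"
  have inj_f: "inj_on f {0..<k}" and C: "f ` {0..<k} = C"
    using assms(2) unfolding bij_betw_def by auto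
  have mod_inj: "inj_on (\<lambda>i. i mod k) {j..<j + k}" by (rule inj_on_mod_window)
  have "?I \<subseteq> {j..<j + k}" using k by auto
  have inj_g: "inj_on g ?I"
    unfolding g_def using inj_f mod_inj \<open>?I \<subseteq> {j..<j + k}\<close> k
    by (auto simp: inj_on_def)
  have "g ` ?I \<subseteq> C - {f j}"
  proof
    fix v assume "v \<in> g ` ?I"
    then obtain i where i: "i \<in> ?I" "v = f (i mod k)" unfolding g_def by auto
    have "i mod k \<noteq> j mod k"
      using inj_onD[OF mod_inj, of i j] i(1) \<open>?I \<subseteq> {j..<j + k}\<close> k by auto
    then have "f (i mod k) \<noteq> f j"
      using inj_onD[OF inj_f, of "i mod k" j] assms(4) k by auto
    then show "v \<in> C - {f j}" using i C k by auto
  qed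
  moreover have "card (g ` ?I) = card (C - {f j})"
  proof -
    have "f j \<in> C" using C assms(4) by auto
    moreover have "card C = k" using bij_betw_same_card[OF assms(2)] by simp
    ultimately show ?thesis using card_image[OF inj_g] k by (simp add: card_Diff_singleton)
  qed
  ultimately have "g ` ?I = C - {f j}"
    using C by (intro card_subset_eq) auto
  moreover have "{g i, g (Suc i)} \<in> E" for i
    using assms(3) k unfolding g_def by (metis mod_Suc_eq mod_less_divisor zero_less_Suc)
  ultimately show ?thesis using matchable_path[OF inj_g] by metis
qed

lemma odd_cycle_comp_near_matchable:
  assumes "H \<subseteq> E" "is_odd_cycle_comp H C"
  shows "near_matchable E C"
proof -
  obtain k f where k: "odd k" "3 \<le> k" and bij: "bij_betw f {0..<k} C"
    and cyc: "{e \<in> H. e \<subseteq> C} = {{f i, f (Suc i mod k)} | i. i < k}"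
    using assms(2) unfolding is_odd_cycle_comp_def by auto
  have "{f i, f (Suc i mod k)} \<in> {e \<in> H. e \<subseteq> C}" if "i < k" for i
    unfolding cyc using that by auto
  then have edges: "\<forall>i<k. {f i, f (Suc i mod k)} \<in> E" using assms(1) by auto
  have inj: "inj_on f {0..<k}" and C: "f ` {0..<k} = C"
    using bij unfolding bij_betw_def by auto
  have "f 0 \<noteq> f 1" using inj_onD[OF inj, of 0 1] k by auto
  moreover have "f 0 \<in> C" "f 1 \<in> C" using C k by auto
  moreover have "{f 0, f 1} \<in> E" using edges[rule_format, of 0] k by simp
  moreover have "matchable E (C - {f 0})" "matchable E (C - {f 1})"
    using odd_cycle_minus_vertex_matchable[OF k(1) bij edges] k by auto
  ultimately show ?thesis unfolding near_matchable_def by auto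
qed

lemma perfect_2_matching_block_decomposition:
  assumes "perfect_2_matching n E H" "E \<subseteq> edges_on n"
  shows "\<exists>S \<B>. block_decomposition E {0..<n} S \<B>"
proof -
  have HE: "H \<subseteq> E" and comps: "\<forall>v<n. is_K2_comp H (comp H v) \<or> is_odd_cycle_comp H (comp H v)"
    using assms(1) unfolding perfect_2_matching_def by auto
  define \<C> where "\<C> = comp H ` {0..<n}"
  define K where "K = {C \<in> \<C>. is_K2_comp H C}"
  have pw: "pairwise disjnt \<C>" unfolding \<C>_def by (rule pairwise_disjnt_comp)
  have V: "\<Union>\<C> = {0..<n}" unfolding \<C>_def using Union_comp[OF subset_trans[OF HE assms(2)]] .
  have "C \<in> H" if C: "C \<in> K" for C
  proof -
    obtain u v where "C = {u, v}" "{e \<in> H. e \<subseteq> C} = {{u, v}}"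
      using C unfolding K_def is_K2_comp_def by auto
    then show ?thesis by auto
  qed
  then have "perfect_matching_on E (\<Union>K) K"
    using HE pairwise_subset[OF pw] unfolding perfect_matching_on_def K_def by auto
  then have "matchable E (\<Union>K)" unfolding matchable_def by auto
  moreover have "\<forall>B\<in>\<C> - K. near_matchable E B"
    using comps odd_cycle_comp_near_matchable[OF HE] unfolding \<C>_def K_def by auto
  moreover have "pairwise disjnt (\<C> - K)" using pw by (rule pairwise_subset) auto
  moreover have "\<Union>K \<inter> \<Union>(\<C> - K) = {}"
    using pairwiseD[OF pw] unfolding K_def disjnt_def by auto
  moreover have "\<Union>K \<union> \<Union>(\<C> - K) = {0..<n}" using V unfolding K_def by auto
  ultimately have "block_decomposition E {0..<n} (\<Union>K) (\<C> - K)"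
    unfolding block_decomposition_def by simp
  then show ?thesis by auto
qed

lemma comp_matching_edge:
  assumes "pairwise disjnt M" "M \<subseteq> edges_on n" "e \<in> M" "v \<in> e"
  shows "comp M v = e"
proof
  show "comp M v \<subseteq> e"
  proof
    fix u assume "u \<in> comp M v"
    then have "(adj M)\<^sup>*\<^sup>* v u" unfolding comp_def by simp
    then show "u \<in> e"
    proof (induction rule: rtranclp_induct)
      case base
      then show ?case using assms(4) .
    next
      case (step y z)
      then have "{y, z} \<in> M" unfolding adj_def by simp
      then have "{y, z} = e"
        using pairwiseD[OF assms(1) _ assms(3)] step.IH by (metis disjnt_iff insertI1)
      then show ?case by auto
    qed
  qed
  obtain w where "e = {v, w}"
    using assms(2-4) unfolding edges_on_def by auto
  then have "adj M v w" unfolding adj_def using assms(3) by simp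
  then show "e \<subseteq> comp M v" using \<open>e = {v, w}\<close> unfolding comp_def by auto
qed

lemma matching_edge_is_K2_comp:
  assumes "pairwise disjnt M" "M \<subseteq> edges_on n" "e \<in> M"
  shows "is_K2_comp M e"
proof -
  obtain u v where e: "e = {u, v}" "u \<noteq> v"
    using assms(2,3) unfolding edges_on_def by auto
  have "e' = e" if "e' \<in> M" "e' \<subseteq> e" for e'
  proof -
    have "e' \<noteq> {}" using that(1) assms(2) unfolding edges_on_def by auto
    then have "\<not> disjnt e' e" using that(2) unfolding disjnt_def by auto
    then show ?thesis using pairwiseD[OF assms(1) that(1) assms(3)] by auto
  qed
  then have "{e' \<in> M. e' \<subseteq> e} = {e}" using assms(3) by auto
  then show ?thesis unfolding is_K2_comp_def using e by auto
qed

lemma perfect_2_matching_of_perfect_matching_on: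
  assumes "perfect_matching_on E {0..<n} M" "E \<subseteq> edges_on n"
  shows "perfect_2_matching n E M"
proof -
  have M: "M \<subseteq> E" "\<Union>M = {0..<n}" "pairwise disjnt M"
    using assms(1) unfolding perfect_matching_on_def by auto
  have "is_K2_comp M (comp M v)" if v: "v < n" for v
  proof -
    have "v \<in> \<Union>M" using M(2) v by simp
    then obtain e where "e \<in> M" "v \<in> e" by auto
    then show ?thesis
      using comp_matching_edge matching_edge_is_K2_comp M(1,3) assms(2) by (metis subset_trans)
  qed
  then show ?thesis unfolding perfect_2_matching_def using M(1) by simp
qed

theorem theorem19:
  fixes d :: "nat list"
  assumes "graphical d" and "even (length d)"
  shows "(\<exists>E H. realization d E \<and> perfect_2_matching (length d) E H) \<longleftrightarrow>
         (\<exists>E M. realization d E \<and> perfect_matching (length d) E M)"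
proof
  assume "\<exists>E H. realization d E \<and> perfect_2_matching (length d) E H"
  then obtain E H where R: "realization d E" and H: "perfect_2_matching (length d) E H"
    by blast
  obtain S \<B> where "block_decomposition E {0..<length d} S \<B>"
    using perfect_2_matching_block_decomposition[OF H realization_subset_edges_on[OF R]] by blast
  then show "\<exists>E M. realization d E \<and> perfect_matching (length d) E M"
    using realization_perfect_matching_of_block_decomposition[OF R _ assms(2)] by blast
next
  assume "\<exists>E M. realization d E \<and> perfect_matching (length d) E M"
  then obtain E M where R: "realization d E" and M: "perfect_matching (length d) E M"
    by blast
  note E = realization_subset_edges_on[OF R]
  have "perfect_2_matching (length d) E M"
    using M perfect_2_matching_of_perfect_matching_on[OF _ E]
    unfolding perfect_matching_iff_perfect_matching_on[OF E] by blast
  with R show "\<exists>E H. realization d E \<and> perfect_2_matching (length d) E H" by blast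
qed

end
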